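(* Let $G$ be a simple directed graph and $\sigma$ a set of its nodes such that $G|_\sigma$ is a clique missing exactly one edge $j\not\to i$. Then for legal $\varepsilon,\delta$, $I-W_\sigma$ has Perron–Frobenius eigenvalue $$\lambda_{\max}=\varepsilon+\tfrac12(1-\varepsilon)\Big(|\sigma|+\sqrt{|\sigma|^2+4(\delta+\varepsilon)/(1-\varepsilon)}\Big).$$
   Context: A clique is a set of nodes pairwise bidirectionally connected; "missing exactly one edge" means all ordered pairs of distinct nodes of $\sigma$ are edges except one. Legal parameters: $\delta>0$, $0<\varepsilon<\frac{\delta}{\delta+1}$. $W=W(G,\varepsilon,\delta)$ has $W_{ii}=0$, $W_{ij}=-1+\varepsilon$ if $j\to i$, $W_{ij}=-1-\delta$ if $i\neq j$, $j\not\to i$; $W_\sigma$ is the principal submatrix on $\sigma$. $I-W_\sigma$ has positive entries and $\lambda_{\max}$ is its Perron–Frobenius eigenvalue. *)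

theory Defs
  imports Complex_Main "Jordan_Normal_Form.Spectral_Radius" "Jordan_Normal_Form.DL_Submatrix"
begin

text \<open>Nodes of G are 0..<n; E j i means there is an edge j -> i.
  A simple directed graph: edges only between distinct nodes of the graph.\<close>
definition simple_digraph :: "nat \<Rightarrow> (nat \<Rightarrow> nat \<Rightarrow> bool) \<Rightarrow> bool" where
  "simple_digraph n E \<longleftrightarrow> (\<forall>a b. E a b \<longrightarrow> a < n \<and> b < n \<and> a \<noteq> b)"

definition W_mat :: "nat \<Rightarrow> (nat \<Rightarrow> nat \<Rightarrow> bool) \<Rightarrow> real \<Rightarrow> real \<Rightarrow> real mat" where
  "W_mat n E \<epsilon> \<delta> = mat n n (\<lambda>(i, j). if i = j then 0 else if E j i then -1 + \<epsilon> else -1 - \<delta>)"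

text \<open>Principal submatrix on sigma (rows/columns in increasing order).\<close>
definition W_sub :: "nat \<Rightarrow> (nat \<Rightarrow> nat \<Rightarrow> bool) \<Rightarrow> real \<Rightarrow> real \<Rightarrow> nat set \<Rightarrow> real mat" where
  "W_sub n E \<epsilon> \<delta> \<sigma> = submatrix (W_mat n E \<epsilon> \<delta>) \<sigma> \<sigma>"

definition pf_eigenvalue :: "real mat \<Rightarrow> real \<Rightarrow> bool" where
  "pf_eigenvalue A lam \<longleftrightarrow> eigenvalue A lam \<and> spectral_radius (map_mat complex_of_real A) = lam"

end

theory Submission
  imports Defs
begin

text \<open>
  List \<sigma> in increasing order and let \<open>p\<close>, \<open>q\<close> be the positions of \<open>i\<close>, \<open>j\<close>. Then
  \<open>I - W\<^sub>\<sigma> = \<epsilon> I + (1 - \<epsilon>) J + (\<delta> + \<epsilon>) e\<^sub>p e\<^sub>q\<^sup>T\<close> with \<open>J\<close> the all-ones matrix.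
  An eigenvector for an eigenvalue \<open>\<lambda> \<noteq> \<epsilon>\<close> is a combination of the all-ones vector and
  \<open>e\<^sub>p\<close>, and on that plane the eigenvalue equation becomes
  \<open>\<mu>\<^sup>2 = (1 - \<epsilon>) |\<sigma>| \<mu> + (1 - \<epsilon>) (\<delta> + \<epsilon>)\<close> for \<open>\<mu> = \<lambda> - \<epsilon>\<close>. Its roots are real with
  negative product and nonnegative sum, so the larger one gives an eigenvalue that dominates
  all others in modulus, over the complex numbers as well.
\<close>

definition missing_edge_mat :: "nat \<Rightarrow> nat \<Rightarrow> nat \<Rightarrow> 'a \<Rightarrow> 'a \<Rightarrow> 'a::field mat" where
  "missing_edge_mat k p q d e =
     mat k k (\<lambda>(r, c). if r = c then 1 else if r = p \<and> c = q then 1 + d else 1 - e)"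

lemma dim_missing_edge_mat [simp]:
  "dim_row (missing_edge_mat k p q d e) = k" "dim_col (missing_edge_mat k p q d e) = k"
  by (simp_all add: missing_edge_mat_def)

lemma missing_edge_mat_carrier [simp]: "missing_edge_mat k p q d e \<in> carrier_mat k k"
  by (simp add: carrier_matI)

lemma missing_edge_mat_index [simp]:
  "r < k \<Longrightarrow> c < k \<Longrightarrow> missing_edge_mat k p q d e $$ (r, c) =
     (if r = c then 1 else if r = p \<and> c = q then 1 + d else 1 - e)"
  by (simp add: missing_edge_mat_def)

lemma map_mat_of_real_missing_edge_mat:
  "map_mat of_real (missing_edge_mat k p q d e) = missing_edge_mat k p q (of_real d) (of_real e)"
  by (rule eq_matI) (auto simp: missing_edge_mat_def)

lemma missing_edge_mat_mult_vec:
  fixes d e :: "'a::field"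
  assumes "p \<noteq> q" "q < k" and v: "v \<in> carrier_vec k" and r: "r < k"
  shows "(missing_edge_mat k p q d e *\<^sub>v v) $ r =
    e * v $ r + (1 - e) * (\<Sum>c<k. v $ c) + (if r = p then (d + e) * v $ q else 0)"
proof -
  have "(missing_edge_mat k p q d e *\<^sub>v v) $ r =
      (\<Sum>c<k. missing_edge_mat k p q d e $$ (r, c) * v $ c)"
    using v r by (simp add: mult_mat_vec_def scalar_prod_def lessThan_atLeast0)
  also have "\<dots> = (\<Sum>c<k. (1 - e) * v $ c + (if c = r then e * v $ c else 0)
      + (if c = q \<and> r = p then (d + e) * v $ c else 0))"
    using assms by (intro sum.cong) (auto simp: algebra_simps)
  also have "\<dots> = e * v $ r + (1 - e) * (\<Sum>c<k. v $ c) + (if r = p then (d + e) * v $ q else 0)"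
    using assms by (simp add: sum.distrib sum_distrib_left)
  finally show ?thesis .
qed

lemma missing_edge_mat_eigenvalueI:
  fixes d e \<mu> :: "'a::field"
  assumes pq: "p \<noteq> q" "p < k" "q < k"
    and quad: "\<mu>\<^sup>2 = (1 - e) * of_nat k * \<mu> + (1 - e) * (d + e)" and "\<mu> \<noteq> 0"
  shows "eigenvalue (missing_edge_mat k p q d e) (e + \<mu>)"
proof -
  define v where "v = vec k (\<lambda>r. \<mu> + (if r = p then d + e else 0))"
  have v: "v \<in> carrier_vec k" by (simp add: v_def)
  have sum_v: "(\<Sum>c<k. v $ c) = of_nat k * \<mu> + (d + e)"
    using pq by (simp add: v_def sum.distrib)
  have "missing_edge_mat k p q d e *\<^sub>v v = (e + \<mu>) \<cdot>\<^sub>v v"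
  proof (rule eq_vecI)
    fix r assume "r < dim_vec ((e + \<mu>) \<cdot>\<^sub>v v)"
    then have r: "r < k" using v by simp
    have "(missing_edge_mat k p q d e *\<^sub>v v) $ r =
        e * v $ r + ((1 - e) * (of_nat k * \<mu> + (d + e)) + (if r = p then (d + e) * \<mu> else 0))"
      using missing_edge_mat_mult_vec[OF pq(1,3) v r] pq sum_v by (simp add: v_def)
    also have "\<dots> = e * v $ r + \<mu> * v $ r"
      using r quad by (simp add: v_def algebra_simps power2_eq_square)
    finally show "(missing_edge_mat k p q d e *\<^sub>v v) $ r = ((e + \<mu>) \<cdot>\<^sub>v v) $ r"
      using r v by (simp add: algebra_simps)
  qed (use v in simp)
  moreover have "v \<noteq> 0\<^sub>v k"
    using pq \<open>\<mu> \<noteq> 0\<close> by (auto simp: v_def dest!: arg_cong[where f = "\<lambda>v. v $ q"])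
  ultimately show ?thesis
    using v unfolding eigenvalue_def eigenvector_def by auto
qed

lemma missing_edge_mat_eigenvalueD:
  fixes d e lam :: "'a::field"
  assumes pq: "p \<noteq> q" "p < k" "q < k"
    and ev: "eigenvalue (missing_edge_mat k p q d e) lam"
  shows "lam = e \<or> (lam - e)\<^sup>2 = (1 - e) * of_nat k * (lam - e) + (1 - e) * (d + e)"
proof (cases "lam = e")
  case False
  define \<mu> where "\<mu> = lam - e"
  have "\<mu> \<noteq> 0" using False by (simp add: \<mu>_def)
  from ev obtain v where v: "v \<in> carrier_vec k" and "v \<noteq> 0\<^sub>v k"
    and Mv: "missing_edge_mat k p q d e *\<^sub>v v = lam \<cdot>\<^sub>v v"
    unfolding eigenvalue_def eigenvector_def by auto
  define a where "a = (1 - e) * (\<Sum>c<k. v $ c) / \<mu>"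
  define b where "b = (d + e) * v $ q / \<mu>"
  have v_eq: "v $ r = a + (if r = p then b else 0)" if r: "r < k" for r
  proof -
    have "lam * v $ r = (missing_edge_mat k p q d e *\<^sub>v v) $ r"
      using Mv r v by simp
    also have "\<dots> = e * v $ r + (1 - e) * (\<Sum>c<k. v $ c) + (if r = p then (d + e) * v $ q else 0)"
      by (rule missing_edge_mat_mult_vec[OF pq(1,3) v r])
    finally have "\<mu> * v $ r = (1 - e) * (\<Sum>c<k. v $ c) + (if r = p then (d + e) * v $ q else 0)"
      by (simp add: \<mu>_def algebra_simps)
    then have "v $ r = ((1 - e) * (\<Sum>c<k. v $ c) + (if r = p then (d + e) * v $ q else 0)) / \<mu>"
      using \<open>\<mu> \<noteq> 0\<close> by (simp add: eq_divide_eq mult.commute)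
    then show ?thesis
      by (simp add: a_def b_def add_divide_distrib)
  qed
  have vq: "v $ q = a" using v_eq[OF pq(3)] pq(1) by simp
  have sum_v: "(\<Sum>c<k. v $ c) = of_nat k * a + b"
    using v_eq pq(2) by (simp add: sum.distrib)
  have "\<mu> * a = (1 - e) * (\<Sum>c<k. v $ c)"
    using \<open>\<mu> \<noteq> 0\<close> by (simp add: a_def)
  then have a_eq: "\<mu> * a = (1 - e) * (of_nat k * a + b)"
    unfolding sum_v .
  have b_eq: "\<mu> * b = (d + e) * a"
    using \<open>\<mu> \<noteq> 0\<close> vq by (simp add: b_def)
  have "a \<noteq> 0"
  proof
    assume "a = 0"
    then have "b = 0" using b_eq \<open>\<mu> \<noteq> 0\<close> by simp
    then have "v = 0\<^sub>v k" using v_eq \<open>a = 0\<close> v by (intro eq_vecI) auto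
    with \<open>v \<noteq> 0\<^sub>v k\<close> show False ..
  qed
  have "\<mu>\<^sup>2 * a = (1 - e) * of_nat k * \<mu> * a + (1 - e) * (\<mu> * b)"
    using arg_cong[OF a_eq, of "(*) \<mu>"] by (simp add: algebra_simps power2_eq_square)
  also have "\<dots> = ((1 - e) * of_nat k * \<mu> + (1 - e) * (d + e)) * a"
    by (simp add: b_eq algebra_simps)
  finally show ?thesis
    using \<open>a \<noteq> 0\<close> by (simp add: \<mu>_def)
qed simp

lemma quadratic_other_root:
  fixes w m b c :: "'a::idom"
  assumes "w\<^sup>2 = b * w + c" and "m\<^sup>2 = b * m + c"
  shows "w = m \<or> w = b - m"
proof -
  have "(w - m) * (w - (b - m)) = 0"
    using assms by (simp add: algebra_simps power2_eq_square)
  then show ?thesis by simp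
qed

lemma missing_edge_mat_eigenvalue_cases:
  fixes d e \<mu> lam :: "'a::field"
  assumes pq: "p \<noteq> q" "p < k" "q < k"
    and quad: "\<mu>\<^sup>2 = (1 - e) * of_nat k * \<mu> + (1 - e) * (d + e)"
    and ev: "eigenvalue (missing_edge_mat k p q d e) lam"
  shows "lam = e \<or> lam = e + \<mu> \<or> lam = e + ((1 - e) * of_nat k - \<mu>)"
  using missing_edge_mat_eigenvalueD[OF pq ev] quadratic_other_root[OF _ quad, of "lam - e"]
  by (auto simp: algebra_simps)

lemma spectral_radius_eqI:
  assumes "A \<in> carrier_mat k k" and "eigenvalue A z"
    and "\<And>w. eigenvalue A w \<Longrightarrow> norm w \<le> norm z"
  shows "spectral_radius A = norm z"
  unfolding spectral_radius_def
proof (rule Max_eqI)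
  show "finite (norm ` spectrum A)"
    using card_finite_spectrum(1)[OF assms(1)] by simp
qed (use assms in \<open>auto simp: spectrum_def\<close>)

lemma scaled_quadratic_root:
  fixes a x c :: real
  assumes "0 < a" and "0 \<le> x\<^sup>2 + 4 * c / a"
  shows "(a / 2 * (x + sqrt (x\<^sup>2 + 4 * c / a)))\<^sup>2
    = a * x * (a / 2 * (x + sqrt (x\<^sup>2 + 4 * c / a))) + a * c"
proof -
  define S where "S = sqrt (x\<^sup>2 + 4 * c / a)"
  have S2: "S\<^sup>2 = x\<^sup>2 + 4 * c / a" using assms(2) by (simp add: S_def)
  have "(a / 2 * (x + S))\<^sup>2 = a\<^sup>2 / 4 * (x\<^sup>2 + 2 * x * S + S\<^sup>2)"
    by (simp add: power_mult_distrib power2_sum power_divide)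
  also have "\<dots> = a * x * (a / 2 * (x + S)) + a * c"
    unfolding S2 using \<open>0 < a\<close> by (simp add: field_simps power2_eq_square)
  finally show ?thesis by (simp add: S_def)
qed

lemma pf_eigenvalue_missing_edge_mat:
  fixes d e :: real
  assumes pq: "p \<noteq> q" "p < k" "q < k" and "0 < d" "0 < e" "e < 1"
  shows "pf_eigenvalue (missing_edge_mat k p q d e)
           (e + (1 - e) / 2 * (real k + sqrt ((real k)\<^sup>2 + 4 * (d + e) / (1 - e))))"
proof -
  define S where "S = sqrt ((real k)\<^sup>2 + 4 * (d + e) / (1 - e))"
  define \<mu> where "\<mu> = (1 - e) / 2 * (real k + S)"
  have "0 < 4 * (d + e) / (1 - e)" using assms by simp
  then have "0 \<le> (real k)\<^sup>2 + 4 * (d + e) / (1 - e)" and "real k < S"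
    by (simp_all add: S_def add_nonneg_nonneg real_less_rsqrt)
  then have quad: "\<mu>\<^sup>2 = (1 - e) * real k * \<mu> + (1 - e) * (d + e)"
    unfolding \<mu>_def S_def using \<open>e < 1\<close> by (intro scaled_quadratic_root) simp_all
  have "0 < real k + S" using \<open>real k < S\<close> by linarith
  then have "0 < \<mu>" using \<open>e < 1\<close> by (simp add: \<mu>_def)
  have "(1 - e) * real k \<le> (1 - e) * (real k + S)"
    using \<open>0 < real k + S\<close> \<open>real k < S\<close> \<open>e < 1\<close> by (intro mult_left_mono) auto
  then have other_root_le: "(1 - e) * real k \<le> 2 * \<mu>" by (simp add: \<mu>_def)
  have real_ev: "eigenvalue (missing_edge_mat k p q d e) (e + \<mu>)"
    by (rule missing_edge_mat_eigenvalueI[OF pq]) (use quad \<open>0 < \<mu>\<close> in simp_all)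
  have quad_complex: "(complex_of_real \<mu>)\<^sup>2
      = (1 - of_real e) * of_nat k * of_real \<mu> + (1 - of_real e) * (of_real d + of_real e)"
    using arg_cong[OF quad, of complex_of_real] by simp
  have norm_top: "norm (complex_of_real (e + \<mu>)) = e + \<mu>"
    using \<open>0 < \<mu>\<close> \<open>0 < e\<close> by (subst norm_of_real) simp
  have "spectral_radius (map_mat complex_of_real (missing_edge_mat k p q d e))
      = norm (complex_of_real (e + \<mu>))"
    unfolding map_mat_of_real_missing_edge_mat
  proof (rule spectral_radius_eqI[OF missing_edge_mat_carrier])
    show "eigenvalue (missing_edge_mat k p q (of_real d) (of_real e)) (complex_of_real (e + \<mu>))"
      unfolding of_real_add
      by (rule missing_edge_mat_eigenvalueI[OF pq quad_complex]) (use \<open>0 < \<mu>\<close> in simp)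
  next
    fix w
    assume "eigenvalue (missing_edge_mat k p q (complex_of_real d) (complex_of_real e)) w"
    then have "w = of_real e \<or> w = of_real (e + \<mu>) \<or> w = of_real (e + ((1 - e) * real k - \<mu>))"
      using missing_edge_mat_eigenvalue_cases[OF pq quad_complex] by simp
    then obtain x where "w = of_real x" and "x \<in> {e, e + \<mu>, e + ((1 - e) * real k - \<mu>)}"
      by blast
    moreover have "0 \<le> (1 - e) * real k" using \<open>e < 1\<close> by simp
    ultimately show "norm w \<le> norm (complex_of_real (e + \<mu>))"
      unfolding norm_top using \<open>0 < \<mu>\<close> \<open>0 < e\<close> other_root_le by auto
  qed
  with real_ev norm_top show ?thesis
    unfolding S_def[symmetric] \<mu>_def[symmetric] pf_eigenvalue_def by simp
qed

lemma card_less_in_set_less_card: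
  fixes S :: "nat set"
  assumes "finite S" "x \<in> S"
  shows "card {a \<in> S. a < x} < card S"
  using assms by (intro psubset_card_mono) auto

lemma one_minus_W_sub_eq_missing_edge_mat:
  assumes \<sigma>: "\<sigma> \<subseteq> {0..<n}" and "i \<in> \<sigma>" "j \<in> \<sigma>" "\<not> E j i"
    and clique: "\<forall>a\<in>\<sigma>. \<forall>b\<in>\<sigma>. a \<noteq> b \<and> (a, b) \<noteq> (j, i) \<longrightarrow> E a b"
  shows "1\<^sub>m (card \<sigma>) - W_sub n E \<epsilon> \<delta> \<sigma>
    = missing_edge_mat (card \<sigma>) (card {a \<in> \<sigma>. a < i}) (card {a \<in> \<sigma>. a < j}) \<delta> \<epsilon>"
    (is "_ = missing_edge_mat ?k ?p ?q \<delta> \<epsilon>")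
proof -
  have rows: "{a. a < dim_row (W_mat n E \<epsilon> \<delta>) \<and> a \<in> \<sigma>} = \<sigma>"
    and cols: "{a. a < dim_col (W_mat n E \<epsilon> \<delta>) \<and> a \<in> \<sigma>} = \<sigma>"
    using \<sigma> by (auto simp: W_mat_def)
  have W_sub: "W_sub n E \<epsilon> \<delta> \<sigma> \<in> carrier_mat ?k ?k"
    unfolding W_sub_def carrier_mat_def mem_Collect_eq dim_submatrix rows cols by simp
  have pick_in: "pick \<sigma> r \<in> \<sigma>" if "r < ?k" for r
    using that by (rule pick_in_set_le)
  have pick_inj: "pick \<sigma> r = pick \<sigma> c \<longleftrightarrow> r = c" if "r < ?k" "c < ?k" for r c
    using card_pick_le[OF that(1)] card_pick_le[OF that(2)] by metis
  have pick_eq: "pick \<sigma> r = x \<longleftrightarrow> r = card {a \<in> \<sigma>. a < x}" if "r < ?k" "x \<in> \<sigma>" for r x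
    using card_pick_le[OF that(1)] pick_card_in_set[OF that(2)] by metis
  have edge_iff: "E (pick \<sigma> c) (pick \<sigma> r) \<longleftrightarrow> \<not> (r = ?p \<and> c = ?q)"
    if "r < ?k" "c < ?k" "r \<noteq> c" for r c
  proof -
    have "(pick \<sigma> c, pick \<sigma> r) = (j, i) \<longleftrightarrow> r = ?p \<and> c = ?q"
      using pick_eq[OF _ \<open>i \<in> \<sigma>\<close>] pick_eq[OF _ \<open>j \<in> \<sigma>\<close>] that by auto
    moreover have "pick \<sigma> c \<noteq> pick \<sigma> r" using pick_inj that by simp
    ultimately show ?thesis
      using clique pick_in that \<open>\<not> E j i\<close> by auto
  qed
  show ?thesis
  proof (rule eq_matI)
    fix r c
    assume "r < dim_row (missing_edge_mat ?k ?p ?q \<delta> \<epsilon>)"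
      and "c < dim_col (missing_edge_mat ?k ?p ?q \<delta> \<epsilon>)"
    then have rc: "r < ?k" "c < ?k" by simp_all
    have "W_sub n E \<epsilon> \<delta> \<sigma> $$ (r, c) = W_mat n E \<epsilon> \<delta> $$ (pick \<sigma> r, pick \<sigma> c)"
      unfolding W_sub_def using rc rows cols by (intro submatrix_index) simp_all
    also have "\<dots> = (if r = c then 0 else if E (pick \<sigma> c) (pick \<sigma> r) then -1 + \<epsilon> else -1 - \<delta>)"
    proof -
      have "pick \<sigma> r < n" "pick \<sigma> c < n" using pick_in[OF rc(1)] pick_in[OF rc(2)] \<sigma> by auto
      then show ?thesis by (simp add: W_mat_def pick_inj[OF rc])
    qed
    finally show "(1\<^sub>m ?k - W_sub n E \<epsilon> \<delta> \<sigma>) $$ (r, c)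
        = missing_edge_mat ?k ?p ?q \<delta> \<epsilon> $$ (r, c)"
      using rc edge_iff W_sub by auto
  qed (use W_sub in simp_all)
qed

theorem corollary3:
  fixes n :: nat and E :: "nat \<Rightarrow> nat \<Rightarrow> bool" and \<sigma> :: "nat set"
    and i j :: nat and \<epsilon> \<delta> :: real
  assumes "simple_digraph n E"
    and "\<sigma> \<subseteq> {0..<n}"
    and "i \<in> \<sigma>" and "j \<in> \<sigma>" and "i \<noteq> j" and "\<not> E j i"
    and "\<forall>a\<in>\<sigma>. \<forall>b\<in>\<sigma>. a \<noteq> b \<and> (a, b) \<noteq> (j, i) \<longrightarrow> E a b"
    and "\<delta> > 0" and "0 < \<epsilon>" and "\<epsilon> < \<delta> / (\<delta> + 1)"
  shows "pf_eigenvalue (1\<^sub>m (card \<sigma>) - W_sub n E \<epsilon> \<delta> \<sigma>)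
           (\<epsilon> + (1 - \<epsilon>) / 2 * (real (card \<sigma>)
              + sqrt ((real (card \<sigma>))\<^sup>2 + 4 * (\<delta> + \<epsilon>) / (1 - \<epsilon>))))"
proof -
  have "finite \<sigma>" using \<open>\<sigma> \<subseteq> {0..<n}\<close> finite_subset by blast
  have "\<delta> / (\<delta> + 1) < 1" using \<open>\<delta> > 0\<close> by simp
  then have "\<epsilon> < 1" using \<open>\<epsilon> < \<delta> / (\<delta> + 1)\<close> by linarith
  have "card {a \<in> \<sigma>. a < i} \<noteq> card {a \<in> \<sigma>. a < j}"
    using \<open>i \<in> \<sigma>\<close> \<open>j \<in> \<sigma>\<close> \<open>i \<noteq> j\<close> by (metis pick_card_in_set)
  then show ?thesis
    unfolding one_minus_W_sub_eq_missing_edge_mat[OF assms(2-4,6-7)]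
    using assms(3,4,8,9) \<open>finite \<sigma>\<close> \<open>\<epsilon> < 1\<close>
    by (intro pf_eigenvalue_missing_edge_mat card_less_in_set_less_card) simp_all
qed

end
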